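(* Let $\Psi^P\subset\mathbb C\times\mathbb C\times\mathbb C^2\times\mathbb C^3$ be the set of solutions $(d,r,\bar t,\bar x)$ of the system $$\sum_{i=1}^3(P_0x_i-P_i)^2-d^2P_0^2=0,\quad n_i(P_0x_j-P_j)-n_j(P_0x_i-P_i)=0\ (1\le i<j\le3),\quad r\,P_0\,h\,\beta-1=0,$$ (where $P_i,n_i,h,\beta$ are evaluated at $\bar t$), and let $\pi_1^P(d,r,\bar t,\bar x)=(d,\bar x)$. Then $\mathcal O_d(\Sigma)$ equals the Zariski closure of $\pi_1^P(\Psi^P)$.
   Context: $f\in\mathbb C[y_1,y_2,y_3]$ irreducible defines the surface $\Sigma$; $f_i=\partial f/\partial y_i$, $h_{\rm imp}=\sum f_i^2$, not identically zero on $\Sigma$. The generic offset $\mathcal O_d(\Sigma)\subset\mathbb C^4$ is the Zariski closure of the projection to $(d,\bar x)$ of the solutions $(d,\bar x,\bar y,u)$ of: $f(\bar y)=0$; $f_i(\bar y)(x_j-y_j)-f_j(\bar y)(x_i-y_i)=0$ ($i<j$); $\sum(x_i-y_i)^2-d^2=0$; $u\,h_{\rm imp}(\bar y)-1=0$. $P(\bar t)=(P_1/P_0,P_2/P_0,P_3/P_0)$, $\bar t=(t_1,t_2)$, $P_i\in\mathbb C[\bar t]$, $\gcd(P_0,\dots,P_3)=1$, is a (not necessarily proper) rational parametrization of $\Sigma$ (image Zariski dense). Write $\frac{\partial P}{\partial t_1}\wedge\frac{\partial P}{\partial t_2}=(A_1/A_0,A_2/A_0,A_3/A_0)$ ($\wedge$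 the cross product, $A_i\in\mathbb C[\bar t]$), $n_i=A_i/\gcd(A_1,A_2,A_3)$, $h=n_1^2+n_2^2+n_3^2$, and fix $\mu\in\mathbb N$ and a nonzero $\beta\in\mathbb C[\bar t]$ with $\gcd(\beta,P_0)=1$ such that $f_i(P(\bar t))=\beta(\bar t)P_0(\bar t)^{-\mu}n_i(\bar t)$ for $i=1,2,3$. *)

theory Defs
  imports "HOL-Analysis.Analysis"
begin

text \<open>Polynomial functions generated by a set of coordinate functions.
  Over the infinite field of complex numbers, polynomials and polynomial
  functions correspond bijectively.\<close>
inductive_set polyfun_on :: "('a \<Rightarrow> complex) set \<Rightarrow> ('a \<Rightarrow> complex) set"
  for C :: "('a \<Rightarrow> complex) set" where
  pf_const: "(\<lambda>_. c) \<in> polyfun_on C"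
| pf_coord: "g \<in> C \<Longrightarrow> g \<in> polyfun_on C"
| pf_add: "g \<in> polyfun_on C \<Longrightarrow> h \<in> polyfun_on C \<Longrightarrow> (\<lambda>x. g x + h x) \<in> polyfun_on C"
| pf_mult: "g \<in> polyfun_on C \<Longrightarrow> h \<in> polyfun_on C \<Longrightarrow> (\<lambda>x. g x * h x) \<in> polyfun_on C"

definition vcoords :: "(complex^'n \<Rightarrow> complex) set" where
  "vcoords = range (\<lambda>i x. x $ i)"

definition coords4 :: "(complex \<times> (complex^3) \<Rightarrow> complex) set" where
  "coords4 = insert fst (range (\<lambda>i p. snd p $ i))"

definition is_const :: "('a \<Rightarrow> complex) \<Rightarrow> bool" where
  "is_const g \<longleftrightarrow> (\<exists>c. g = (\<lambda>_. c))"

definition pf_dvd :: "('a \<Rightarrow> complex) set \<Rightarrow> ('a \<Rightarrow> complex) \<Rightarrow> ('a \<Rightarrow> complex) \<Rightarrow> bool" where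
  "pf_dvd C g F \<longleftrightarrow> (\<exists>q \<in> polyfun_on C. F = (\<lambda>x. g x * q x))"

text \<open>gcd of the family is 1: every common divisor is a (unit) constant.\<close>
definition pf_coprime :: "('a \<Rightarrow> complex) set \<Rightarrow> ('a \<Rightarrow> complex) set \<Rightarrow> bool" where
  "pf_coprime C Fs \<longleftrightarrow> (\<forall>g \<in> polyfun_on C. (\<forall>F \<in> Fs. pf_dvd C g F) \<longrightarrow> is_const g)"

definition pf_irreducible :: "('a \<Rightarrow> complex) set \<Rightarrow> ('a \<Rightarrow> complex) \<Rightarrow> bool" where
  "pf_irreducible C f \<longleftrightarrow> f \<in> polyfun_on C \<and> \<not> is_const f \<and>
     (\<forall>g \<in> polyfun_on C. \<forall>h \<in> polyfun_on C. f = (\<lambda>x. g x * h x) \<longrightarrow> is_const g \<or> is_const h)"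

definition zariski_closure :: "('a \<Rightarrow> complex) set \<Rightarrow> 'a set \<Rightarrow> 'a set" where
  "zariski_closure C S = {p. \<forall>g \<in> polyfun_on C. (\<forall>q \<in> S. g q = 0) \<longrightarrow> g p = 0}"

definition pderiv_v :: "'n \<Rightarrow> (complex^'n \<Rightarrow> complex) \<Rightarrow> complex^'n \<Rightarrow> complex" where
  "pderiv_v i F y = deriv (\<lambda>s. F (\<chi> j. if j = i then s else y $ j)) (y $ i)"

definition cross3c :: "complex^3 \<Rightarrow> complex^3 \<Rightarrow> complex^3" where
  "cross3c a b = vector [a$2 * b$3 - a$3 * b$2, a$3 * b$1 - a$1 * b$3, a$1 * b$2 - a$2 * b$1]"

definition offset_incidence :: "(complex^3 \<Rightarrow> complex) \<Rightarrow> (complex \<times> (complex^3)) set" where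
  "offset_incidence f = {(d, x). \<exists>y u. f y = 0 \<and>
      (\<forall>i j. pderiv_v i f y * (x$j - y$j) - pderiv_v j f y * (x$i - y$i) = 0) \<and>
      (\<Sum>i\<in>UNIV. (x$i - y$i)^2) - d^2 = 0 \<and>
      u * (\<Sum>i\<in>UNIV. (pderiv_v i f y)^2) - 1 = 0}"

definition generic_offset :: "(complex^3 \<Rightarrow> complex) \<Rightarrow> (complex \<times> (complex^3)) set" where
  "generic_offset f = zariski_closure coords4 (offset_incidence f)"

end

theory Submission imports Defs "HOL-Computational_Algebra.Polynomial" begin

(* Write O for the offset incidence set (whose Zariski closure is the generic
   offset) and O^P for the parametric incidence set of the theorem.  We show
     (1) O^P \<subseteq> O, and  (2) O \<subseteq> closure(O^P);
   together these give closure(O) = closure(O^P).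
   (1) is a direct computation: at a parameter t with P0 h \<beta> \<noteq> 0 the point y = P(t) lies on the
   surface and the gradient of f at y is the nonzero multiple \<beta>/P0^\<mu> of the normal n(t).
   (2) Every point of O has the normal form (d, y + l\<nabla>f(y)) with d\<^sup>2 = l\<^sup>2 |\<nabla>f(y)|\<^sup>2.  For a
   polynomial G vanishing on O^P and fixed l we split G(d, y + l\<nabla>f(y)) = a(y) + d b(y) on the
   quadric d\<^sup>2 = l\<^sup>2 |\<nabla>f(y)|\<^sup>2; vanishing at both square roots d forces a = 0 and l\<^sup>2|\<nabla>f|\<^sup>2 b = 0
   at every generic surface point y = P(t).  Since the generic parameters are dense (a nonzero
   polynomial cannot vanish on a ball) and the image of P is Zariski dense in the surface,
   these polynomial identities hold on the whole surface, which yields G = 0 on O. *)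

section \<open>Polynomial functions\<close>

lemma polyfun_comp:
  assumes "G \<in> polyfun_on C" "\<And>c. c \<in> C \<Longrightarrow> (\<lambda>x. c (\<phi> x)) \<in> polyfun_on D"
  shows "(\<lambda>x. G (\<phi> x)) \<in> polyfun_on D"
  using assms(1)
proof (induction rule: polyfun_on.induct)
  case (pf_const c) then show ?case by (rule polyfun_on.pf_const)
next
  case (pf_coord g) then show ?case using assms(2) by blast
next
  case (pf_add g h) then show ?case using polyfun_on.pf_add by blast
next
  case (pf_mult g h) then show ?case using polyfun_on.pf_mult by blast
qed

lemma polyfun_sum:
  assumes "finite S" "\<And>i. i \<in> S \<Longrightarrow> F i \<in> polyfun_on C"
  shows "(\<lambda>x. \<Sum>i\<in>S. F i x) \<in> polyfun_on C"
  using assms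
proof (induction S rule: finite_induct)
  case empty then show ?case using polyfun_on.pf_const[of 0] by simp
next
  case (insert a S)
  then show ?case using polyfun_on.pf_add[of "F a" C "\<lambda>x. \<Sum>i\<in>S. F i x"] by simp
qed

lemma polyfun_pow:
  assumes "F \<in> polyfun_on C" shows "(\<lambda>x. F x ^ k) \<in> polyfun_on C"
proof (induction k)
  case 0 then show ?case using polyfun_on.pf_const[of 1] by simp
next
  case (Suc k) then show ?case using polyfun_on.pf_mult[OF assms Suc] by simp
qed

lemma vcoord_pf: "(\<lambda>x. x $ i) \<in> polyfun_on vcoords"
  by (rule polyfun_on.pf_coord) (auto simp: vcoords_def)

lemma fst_coords4_pf: "fst \<in> polyfun_on coords4"
  by (rule polyfun_on.pf_coord) (simp add: coords4_def)

lemma snd_coords4_pf: "(\<lambda>q. snd q $ j) \<in> polyfun_on coords4"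
  by (rule polyfun_on.pf_coord) (simp add: coords4_def)

definition coord_update :: "'n \<Rightarrow> complex^'n \<Rightarrow> complex \<Rightarrow> complex^'n" where
  "coord_update i y s = (\<chi> j. if j = i then s else y $ j)"

lemma polyfun_has_partial_derivative:
  assumes "F \<in> polyfun_on (vcoords :: (complex^'n \<Rightarrow> complex) set)"
  shows "\<exists>F' \<in> polyfun_on vcoords. \<forall>y s.
           ((\<lambda>s. F (coord_update i y s)) has_field_derivative F' (coord_update i y s)) (at s)"
  using assms
proof (induction rule: polyfun_on.induct)
  case (pf_const c) then show ?case
    by (intro bexI[of _ "\<lambda>_. 0"]) (auto intro!: polyfun_on.pf_const derivative_eq_intros)
next
  case (pf_coord g)
  then obtain k where g: "g = (\<lambda>x. x $ k)" by (auto simp: vcoords_def)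
  show ?case
    by (intro bexI[of _ "\<lambda>_. if k = i then 1 else 0"])
      (auto simp: g coord_update_def intro!: polyfun_on.pf_const derivative_eq_intros)
next
  case (pf_add g h)
  then obtain g' h' where "g' \<in> polyfun_on vcoords" "h' \<in> polyfun_on vcoords"
    "\<forall>y s. ((\<lambda>s. g (coord_update i y s)) has_field_derivative g' (coord_update i y s)) (at s)"
    "\<forall>y s. ((\<lambda>s. h (coord_update i y s)) has_field_derivative h' (coord_update i y s)) (at s)"
    by blast
  then show ?case
    by (intro bexI[of _ "\<lambda>x. g' x + h' x"] allI polyfun_on.pf_add DERIV_add) auto
next
  case (pf_mult g h)
  then obtain g' h' where "g' \<in> polyfun_on vcoords" "h' \<in> polyfun_on vcoords"
    "\<forall>y s. ((\<lambda>s. g (coord_update i y s)) has_field_derivative g' (coord_update i y s)) (at s)"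
    "\<forall>y s. ((\<lambda>s. h (coord_update i y s)) has_field_derivative h' (coord_update i y s)) (at s)"
    by blast
  then show ?case
    by (intro bexI[of _ "\<lambda>x. g' x * h x + h' x * g x"] allI
        polyfun_on.pf_add polyfun_on.pf_mult DERIV_mult pf_mult.hyps) auto
qed

lemma polyfun_pderiv_v:
  assumes "F \<in> polyfun_on (vcoords :: (complex^'n \<Rightarrow> complex) set)"
  shows "(\<lambda>y. pderiv_v i F y) \<in> polyfun_on vcoords"
proof -
  obtain F' where F': "F' \<in> polyfun_on vcoords"
    "\<forall>y s. ((\<lambda>s. F (coord_update i y s)) has_field_derivative F' (coord_update i y s)) (at s)"
    using polyfun_has_partial_derivative[OF assms] by blast
  have "pderiv_v i F y = F' y" for y
  proof -
    have "coord_update i y (y $ i) = y" by (simp add: coord_update_def vec_eq_iff)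
    then show ?thesis using DERIV_imp_deriv[OF F'(2)[rule_format, of y "y$i"]]
      by (simp add: pderiv_v_def coord_update_def)
  qed
  then show ?thesis using F'(1) by simp
qed

lemma polyfun_on_line:
  assumes "F \<in> polyfun_on (vcoords :: (complex^'n \<Rightarrow> complex) set)"
  shows "\<exists>p. \<forall>s. F (\<chi> j. a$j + s * b$j) = poly p s"
  using assms
proof (induction rule: polyfun_on.induct)
  case (pf_const c) then show ?case by (intro exI[of _ "[:c:]"]) simp
next
  case (pf_coord g)
  then obtain k where g: "g = (\<lambda>x. x $ k)" by (auto simp: vcoords_def)
  show ?case by (intro exI[of _ "[:a$k, b$k:]"]) (simp add: g algebra_simps)
next
  case (pf_add g h)
  then obtain p q where "\<forall>s. g (\<chi> j. a$j + s * b$j) = poly p s" "\<forall>s. h (\<chi> j. a$j + s * b$j) = poly q s"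
    by blast
  then show ?case by (intro exI[of _ "p + q"]) simp
next
  case (pf_mult g h)
  then obtain p q where "\<forall>s. g (\<chi> j. a$j + s * b$j) = poly p s" "\<forall>s. h (\<chi> j. a$j + s * b$j) = poly q s"
    by blast
  then show ?case by (intro exI[of _ "p * q"]) simp
qed

text \<open>Identity principle: a polynomial function vanishing on a ball vanishes everywhere.  Along
  the line from the centre to any point it is a univariate polynomial with infinitely many roots.\<close>
lemma polyfun_zero_on_ball:
  assumes "F \<in> polyfun_on (vcoords :: (complex^'n \<Rightarrow> complex) set)"
    and "r > 0" and "\<And>t. t \<in> ball t0 r \<Longrightarrow> F t = 0"
  shows "F t = 0"
proof (cases "t = t0")
  case True then show ?thesis using assms by simp
next
  case False
  define b where "b = t - t0"
  have nb: "norm b > 0" using False by (simp add: b_def)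
  obtain p where p: "\<And>s. F (\<chi> j. t0$j + s * b$j) = poly p s" using polyfun_on_line[OF assms(1)] by blast
  have on_segment: "(\<chi> j. t0$j + of_real \<tau> * b$j) = t0 + \<tau> *\<^sub>R b" for \<tau>
    by (simp add: vec_eq_iff) (simp add: scaleR_conv_of_real)
  have "of_real ` {0<..<r / norm b} \<subseteq> {x. poly p x = 0}"
  proof
    fix z :: complex assume "z \<in> of_real ` {0<..<r / norm b}"
    then obtain \<tau> where \<tau>: "z = of_real \<tau>" "0 < \<tau>" "\<tau> < r / norm b" by auto
    have "dist t0 (t0 + \<tau> *\<^sub>R b) = \<tau> * norm b" using \<tau> by (simp add: dist_norm)
    also have "\<dots> < r" using \<tau> nb by (simp add: pos_less_divide_eq)
    finally have "F (t0 + \<tau> *\<^sub>R b) = 0" using assms(3) by simp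
    then show "z \<in> {x. poly p x = 0}" using p[of z] on_segment[of \<tau>] \<tau> by simp
  qed
  moreover have "infinite (of_real ` {0<..<r / norm b} :: complex set)"
    using nb assms(2) by (subst finite_image_iff) (auto simp: inj_on_def)
  ultimately have "p = 0" using finite_subset poly_roots_finite by blast
  moreover have "(\<chi> j. t0$j + 1 * b$j) = t" by (simp add: vec_eq_iff b_def)
  ultimately show ?thesis using p[of 1] by simp
qed

lemma polyfun_continuous:
  assumes "F \<in> polyfun_on (vcoords :: (complex^'n \<Rightarrow> complex) set)"
  shows "continuous_on UNIV F"
  using assms
proof (induction rule: polyfun_on.induct)
  case (pf_coord g)
  then obtain k where g: "g = (\<lambda>x. x $ k)" by (auto simp: vcoords_def)
  show ?case unfolding g by (intro continuous_intros)
qed (auto intro!: continuous_intros)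

text \<open>Polynomial functions form an integral domain: the nonvanishing set of the first factor is
  open, and the second factor cannot vanish on a ball inside it.\<close>
lemma polyfun_mult_nonzero:
  assumes "F \<in> polyfun_on (vcoords :: (complex^'n \<Rightarrow> complex) set)" "G \<in> polyfun_on vcoords"
    and "F \<noteq> (\<lambda>_. 0)" "G \<noteq> (\<lambda>_. 0)"
  shows "(\<lambda>x. F x * G x) \<noteq> (\<lambda>_. 0)"
proof -
  obtain t1 where t1: "F t1 \<noteq> 0" using assms(3) by auto
  have "open {x. F x \<noteq> 0}"
    by (rule open_Collect_neq[OF polyfun_continuous[OF assms(1)] continuous_on_const])
  then obtain e where e: "e > 0" "ball t1 e \<subseteq> {x. F x \<noteq> 0}" using t1 open_contains_ball by blast
  obtain t2 where "t2 \<in> ball t1 e" "G t2 \<noteq> 0"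
    using polyfun_zero_on_ball[OF assms(2) e(1)] assms(4) by blast
  then show ?thesis using e(2) by (auto simp: fun_eq_iff)
qed

text \<open>A continuous function on an open set which vanishes wherever a nonzero polynomial function
  does not vanish is identically zero there: the complement of a hypersurface is dense.\<close>
lemma vanishes_off_hypersurface:
  fixes \<phi> :: "complex^'n \<Rightarrow> complex"
  assumes U: "open U" "continuous_on U \<phi>" "t \<in> U"
    and w: "w \<in> polyfun_on vcoords" "w \<noteq> (\<lambda>_. 0)"
    and vanish: "\<And>s. s \<in> U \<Longrightarrow> w s \<noteq> 0 \<Longrightarrow> \<phi> s = 0"
  shows "\<phi> t = 0"
proof (rule ccontr)
  assume \<phi>t: "\<phi> t \<noteq> 0"
  have "isCont \<phi> t" using U continuous_on_eq_continuous_at by blast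
  then obtain e1 where e1: "e1 > 0" "\<forall>s. dist t s < e1 \<longrightarrow> \<phi> s \<noteq> 0"
    using continuous_at_avoid \<phi>t by blast
  obtain e2 where e2: "e2 > 0" "ball t e2 \<subseteq> U" using U open_contains_ball by blast
  have "w s = 0" if s: "s \<in> ball t (min e1 e2)" for s
  proof -
    have "s \<in> U" "\<phi> s \<noteq> 0" using s e1 e2 by (auto simp: dist_commute)
    then show ?thesis using vanish by blast
  qed
  then have "w = (\<lambda>_. 0)"
    using polyfun_zero_on_ball[OF w(1), of "min e1 e2"] e1 e2 by auto
  with w(2) show False ..
qed

lemma zariski_closure_incl: "A \<subseteq> zariski_closure C A"
  unfolding zariski_closure_def by blast

lemma zariski_closure_minimal:
  assumes "A \<subseteq> zariski_closure C B" shows "zariski_closure C A \<subseteq> zariski_closure C B"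
  using assms unfolding zariski_closure_def by blast

section \<open>Eliminating the distance variable\<close>

lemma even_odd_decomposition:
  assumes "p \<in> polyfun_on coords4"
  shows "\<exists>A \<in> polyfun_on coords4. \<exists>B \<in> polyfun_on coords4.
           \<forall>d x. p (d, x) = A (d^2, x) + d * B (d^2, x)"
  using assms
proof (induction rule: polyfun_on.induct)
  case (pf_const c) then show ?case
    by (intro bexI[of _ "\<lambda>_. c"] bexI[of _ "\<lambda>_. 0"]) (auto intro: polyfun_on.pf_const)
next
  case (pf_coord g)
  then consider "g = fst" | k where "g = (\<lambda>p. snd p $ k)" by (auto simp: coords4_def)
  then show ?case
  proof cases
    case 1 then show ?thesis
      by (intro bexI[of _ "\<lambda>_. 0"] bexI[of _ "\<lambda>_. 1"]) (auto intro: polyfun_on.pf_const)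
  next
    case 2 then show ?thesis
      by (intro bexI[of _ "\<lambda>p. snd p $ k"] bexI[of _ "\<lambda>_. 0"])
        (auto intro: polyfun_on.pf_const snd_coords4_pf)
  qed
next
  case (pf_add g h)
  then obtain A1 B1 A2 B2 where 1: "A1 \<in> polyfun_on coords4" "B1 \<in> polyfun_on coords4"
      "\<forall>d x. g (d, x) = A1 (d^2, x) + d * B1 (d^2, x)"
    and 2: "A2 \<in> polyfun_on coords4" "B2 \<in> polyfun_on coords4"
      "\<forall>d x. h (d, x) = A2 (d^2, x) + d * B2 (d^2, x)" by blast
  show ?case
    by (intro bexI[of _ "\<lambda>p. A1 p + A2 p"] bexI[of _ "\<lambda>p. B1 p + B2 p"] polyfun_on.pf_add 1 2)
      (simp add: 1(3) 2(3) algebra_simps)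
next
  case (pf_mult g h)
  then obtain A1 B1 A2 B2 where 1: "A1 \<in> polyfun_on coords4" "B1 \<in> polyfun_on coords4"
      "\<forall>d x. g (d, x) = A1 (d^2, x) + d * B1 (d^2, x)"
    and 2: "A2 \<in> polyfun_on coords4" "B2 \<in> polyfun_on coords4"
      "\<forall>d x. h (d, x) = A2 (d^2, x) + d * B2 (d^2, x)" by blast
  show ?case
    by (intro bexI[of _ "\<lambda>p. A1 p * A2 p + fst p * (B1 p * B2 p)"]
        bexI[of _ "\<lambda>p. A1 p * B2 p + B1 p * A2 p"]
        polyfun_on.pf_add polyfun_on.pf_mult 1 2 fst_coords4_pf allI)
      (simp add: 1(3) 2(3) algebra_simps power2_eq_square)
qed

lemma decomposition_on_quadric:
  assumes "\<Phi> \<in> polyfun_on coords4" "s \<in> polyfun_on vcoords"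
  obtains a b where "a \<in> polyfun_on vcoords" "b \<in> polyfun_on vcoords"
    "\<And>d x. d^2 = s x \<Longrightarrow> \<Phi> (d, x) = a x + d * b x"
proof -
  obtain A B where A: "A \<in> polyfun_on coords4" and B: "B \<in> polyfun_on coords4"
    and AB: "\<forall>d x. \<Phi> (d, x) = A (d^2, x) + d * B (d^2, x)"
    using even_odd_decomposition[OF assms(1)] by blast
  have substitute: "(\<lambda>x. c (s x, x)) \<in> polyfun_on vcoords" if "c \<in> coords4" for c
    using that assms(2) by (auto simp: coords4_def vcoord_pf)
  show ?thesis
    by (rule that[of "\<lambda>x. A (s x, x)" "\<lambda>x. B (s x, x)"])
      (auto simp: AB intro: polyfun_comp[OF A substitute] polyfun_comp[OF B substitute])
qed

lemma vanishing_at_both_roots: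
  fixes a b s :: complex
  assumes "\<And>d. d^2 = s \<Longrightarrow> a + d * b = 0"
  shows "a = 0" "s * b = 0"
proof -
  define \<delta> where "\<delta> = csqrt s"
  have root: "\<delta>^2 = s" "(-\<delta>)^2 = s" by (simp_all add: \<delta>_def)
  have plus: "a + \<delta> * b = 0" and minus: "a + (-\<delta>) * b = 0"
    using assms[OF root(1)] assms[OF root(2)] .
  have "2 * a = (a + \<delta> * b) + (a + (-\<delta>) * b)" by (simp add: algebra_simps)
  then show "a = 0" using plus minus by simp
  then have "\<delta> * b = 0" using plus by simp
  then show "s * b = 0" by (metis \<delta>_def mult.assoc mult_zero_right power2_csqrt power2_eq_square)
qed

lemma root_combination_vanishes:
  fixes a b s d :: complex
  assumes "a = 0" "s * b = 0" "d^2 = s"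
  shows "a + d * b = 0"
  using assms by (cases "d = 0") auto

section \<open>Normal lines of the surface\<close>

definition himp :: "(complex^'n \<Rightarrow> complex) \<Rightarrow> complex^'n \<Rightarrow> complex" where
  "himp F y = (\<Sum>i\<in>UNIV. (pderiv_v i F y)^2)"

definition normal_point :: "(complex^'n \<Rightarrow> complex) \<Rightarrow> complex \<Rightarrow> complex^'n \<Rightarrow> complex^'n" where
  "normal_point F l y = (\<chi> j. y $ j + l * pderiv_v j F y)"

lemma polyfun_himp: "F \<in> polyfun_on vcoords \<Longrightarrow> himp F \<in> polyfun_on vcoords"
  unfolding himp_def by (intro polyfun_sum polyfun_pow polyfun_pderiv_v) simp

lemma polyfun_along_normals:
  assumes "G \<in> polyfun_on coords4" "F \<in> polyfun_on vcoords"
  shows "(\<lambda>q. G (fst q, normal_point F l (snd q))) \<in> polyfun_on coords4"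
proof (rule polyfun_comp[OF assms(1)])
  have grad: "(\<lambda>q. pderiv_v j F (snd q)) \<in> polyfun_on coords4" for j
    by (rule polyfun_comp[OF polyfun_pderiv_v[OF assms(2)]]) (auto simp: vcoords_def snd_coords4_pf)
  fix c :: "complex \<times> (complex^3) \<Rightarrow> complex" assume "c \<in> coords4"
  then consider "c = fst" | k where "c = (\<lambda>p. snd p $ k)" by (auto simp: coords4_def)
  then show "(\<lambda>q. c (fst q, normal_point F l (snd q))) \<in> polyfun_on coords4"
  proof cases
    case 1 then show ?thesis by (simp add: fst_coords4_pf)
  next
    case 2 then show ?thesis
      by (simp add: normal_point_def polyfun_on.pf_add polyfun_on.pf_mult polyfun_on.pf_const
          snd_coords4_pf grad)
  qed
qed

lemma parallel_vectors:
  fixes v w :: "complex^3"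
  assumes H: "(\<Sum>i\<in>UNIV. (v$i)^2) \<noteq> 0" and cr: "\<And>i j. v$i * w$j - v$j * w$i = 0"
  shows "w$j = ((\<Sum>i\<in>UNIV. v$i * w$i) / (\<Sum>i\<in>UNIV. (v$i)^2)) * v$j"
proof -
  have "(\<Sum>i\<in>UNIV. (v$i)^2) * w$j = (\<Sum>i\<in>UNIV. v$i * (v$i * w$j))"
    by (simp add: sum_distrib_right power2_eq_square mult.assoc)
  also have "\<dots> = (\<Sum>i\<in>UNIV. v$i * (v$j * w$i))"
    using cr by (intro sum.cong refl) (metis eq_iff_diff_eq_0)
  also have "\<dots> = v$j * (\<Sum>i\<in>UNIV. v$i * w$i)"
    by (simp add: sum_distrib_left algebra_simps)
  finally show ?thesis using H by (simp add: field_simps)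
qed

lemma offset_incidence_normal_form:
  assumes "(d, x) \<in> offset_incidence f"
  obtains y l where "f y = 0" "x = normal_point f l y" "d^2 = l^2 * himp f y"
proof -
  obtain y u where fy: "f y = 0"
    and cr: "\<forall>i j. pderiv_v i f y * (x$j - y$j) - pderiv_v j f y * (x$i - y$i) = 0"
    and sq: "(\<Sum>i\<in>UNIV. (x$i - y$i)^2) - d^2 = 0"
    and u: "u * himp f y - 1 = 0"
    using assms unfolding offset_incidence_def himp_def by blast
  have H: "himp f y \<noteq> 0" using u by auto
  define l where "l = (\<Sum>i\<in>UNIV. pderiv_v i f y * (x$i - y$i)) / himp f y"
  have x: "x$j - y$j = l * pderiv_v j f y" for j
    using parallel_vectors[of "\<chi> i. pderiv_v i f y" "x - y" j] H cr
    by (simp add: himp_def l_def)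
  have "x = normal_point f l y" by (simp add: normal_point_def vec_eq_iff x[symmetric])
  moreover have "d^2 = l^2 * himp f y"
    using sq by (simp add: x himp_def power_mult_distrib sum_distrib_left)
  ultimately show ?thesis using that fy by blast
qed

section \<open>The parametric incidence set\<close>

definition param_point :: "('a \<Rightarrow> complex) \<Rightarrow> (3 \<Rightarrow> 'a \<Rightarrow> complex) \<Rightarrow> 'a \<Rightarrow> complex^3" where
  "param_point P0 P t = (\<chi> i. P i t / P0 t)"

definition param_incidence ::
    "('a \<Rightarrow> complex) \<Rightarrow> (3 \<Rightarrow> 'a \<Rightarrow> complex) \<Rightarrow> (3 \<Rightarrow> 'a \<Rightarrow> complex) \<Rightarrow> ('a \<Rightarrow> complex) \<Rightarrow>
     ('a \<Rightarrow> complex) \<Rightarrow> (complex \<times> (complex^3)) set" where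
  "param_incidence P0 P n h \<beta> =
     {(d, x). \<exists>r t. (\<Sum>i\<in>UNIV. (P0 t * x$i - P i t)^2) - d^2 * (P0 t)^2 = 0 \<and>
        (\<forall>i j. n i t * (P0 t * x$j - P j t) - n j t * (P0 t * x$i - P i t) = 0) \<and>
        r * P0 t * h t * \<beta> t - 1 = 0}"

locale offset_parametrization =
  fixes f :: "complex^3 \<Rightarrow> complex"
    and P0 :: "complex^2 \<Rightarrow> complex" and P :: "3 \<Rightarrow> complex^2 \<Rightarrow> complex"
    and n :: "3 \<Rightarrow> complex^2 \<Rightarrow> complex" and h \<beta> :: "complex^2 \<Rightarrow> complex" and \<mu> :: nat
  assumes f_pf: "f \<in> polyfun_on vcoords"
    and himp_nz: "\<exists>y. f y = 0 \<and> himp f y \<noteq> 0"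
    and P0_pf: "P0 \<in> polyfun_on vcoords" and P_pf: "\<And>i. P i \<in> polyfun_on vcoords"
    and P0_nz: "P0 \<noteq> (\<lambda>_. 0)"
    and P_on: "\<And>t. P0 t \<noteq> 0 \<Longrightarrow> f (param_point P0 P t) = 0"
    and P_dense: "zariski_closure vcoords (param_point P0 P ` {t. P0 t \<noteq> 0}) = {y. f y = 0}"
    and n_pf: "\<And>i. n i \<in> polyfun_on vcoords"
    and h_eq: "\<And>t. h t = (\<Sum>i\<in>UNIV. (n i t)^2)"
    and \<beta>_pf: "\<beta> \<in> polyfun_on vcoords" and \<beta>_nz: "\<beta> \<noteq> (\<lambda>_. 0)"
    and f_grad: "\<And>t i. P0 t \<noteq> 0 \<Longrightarrow>
        pderiv_v i f (param_point P0 P t) = \<beta> t * inverse (P0 t ^ \<mu>) * n i t"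
begin

lemma himp_param_point:
  "P0 t \<noteq> 0 \<Longrightarrow> himp f (param_point P0 P t) = (\<beta> t * inverse (P0 t ^ \<mu>))^2 * h t"
  by (simp add: himp_def f_grad h_eq power_mult_distrib sum_distrib_left)

lemma vanishing_from_image:
  assumes "q \<in> polyfun_on vcoords" "\<And>t. P0 t \<noteq> 0 \<Longrightarrow> q (param_point P0 P t) = 0" "f y = 0"
  shows "q y = 0"
  using assms P_dense unfolding zariski_closure_def by blast

lemma h_nonzero: "h \<noteq> (\<lambda>_. 0)"
proof
  assume "h = (\<lambda>_. 0)"
  then have "himp f y = 0" if "f y = 0" for y
    using vanishing_from_image[OF polyfun_himp[OF f_pf] _ that] by (simp add: himp_param_point)
  with himp_nz show False by blast
qed

lemma param_point_continuous: "continuous_on {t. P0 t \<noteq> 0} (param_point P0 P)"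
proof -
  have "continuous_on {t. P0 t \<noteq> 0} (\<lambda>t. P i t / P0 t)" for i
    using continuous_on_subset[OF polyfun_continuous[OF P_pf]]
      continuous_on_subset[OF polyfun_continuous[OF P0_pf]]
    by (intro continuous_intros) auto
  then show ?thesis unfolding param_point_def by (intro continuous_on_vec_lambda)
qed

text \<open>It suffices to check vanishing at the generic parameters, where \<open>P0 h \<beta> \<noteq> 0\<close>: these are
  dense among all parameters with \<open>P0 \<noteq> 0\<close>.\<close>
lemma vanishing_from_generic_image:
  assumes q: "q \<in> polyfun_on vcoords"
    and vanish: "\<And>t. P0 t * h t * \<beta> t \<noteq> 0 \<Longrightarrow> q (param_point P0 P t) = 0" and "f y = 0"
  shows "q y = 0"
proof (rule vanishing_from_image[OF q _ \<open>f y = 0\<close>])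
  fix t assume "P0 t \<noteq> 0"
  have h_pf: "h \<in> polyfun_on vcoords"
    unfolding h_eq[abs_def] by (intro polyfun_sum polyfun_pow n_pf) simp
  show "q (param_point P0 P t) = 0"
  proof (rule vanishes_off_hypersurface[where w = "\<lambda>t. P0 t * h t * \<beta> t"])
    show "open {t. P0 t \<noteq> 0}"
      by (rule open_Collect_neq[OF polyfun_continuous[OF P0_pf] continuous_on_const])
    show "continuous_on {t. P0 t \<noteq> 0} (\<lambda>t. q (param_point P0 P t))"
      by (rule continuous_on_compose2[OF polyfun_continuous[OF q] param_point_continuous]) auto
    show "(\<lambda>t. P0 t * h t * \<beta> t) \<in> polyfun_on vcoords"
      by (intro polyfun_on.pf_mult P0_pf h_pf \<beta>_pf)
    show "(\<lambda>t. P0 t * h t * \<beta> t) \<noteq> (\<lambda>_. 0)"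
      by (intro polyfun_mult_nonzero polyfun_on.pf_mult P0_pf h_pf \<beta>_pf P0_nz h_nonzero \<beta>_nz)
  qed (use \<open>P0 t \<noteq> 0\<close> vanish in auto)
qed

lemma param_incidence_subset: "param_incidence P0 P n h \<beta> \<subseteq> offset_incidence f"
proof
  fix p assume "p \<in> param_incidence P0 P n h \<beta>"
  then obtain d x r t where p: "p = (d, x)"
    and sq: "(\<Sum>i\<in>UNIV. (P0 t * x$i - P i t)^2) - d^2 * (P0 t)^2 = 0"
    and cr: "\<forall>i j. n i t * (P0 t * x$j - P j t) - n j t * (P0 t * x$i - P i t) = 0"
    and r: "r * P0 t * h t * \<beta> t - 1 = 0" unfolding param_incidence_def by blast
  have nz: "P0 t \<noteq> 0" "h t \<noteq> 0" "\<beta> t \<noteq> 0" using r by auto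
  define c where "c = \<beta> t * inverse (P0 t ^ \<mu>)"
  define y where "y = param_point P0 P t"
  have c: "c \<noteq> 0" using nz by (simp add: c_def)
  have grad: "pderiv_v i f y = c * n i t" for i using f_grad nz by (simp add: y_def c_def)
  have yi: "y$i = P i t / P0 t" for i by (simp add: y_def param_point_def)
  have "pderiv_v i f y * (x$j - y$j) - pderiv_v j f y * (x$i - y$i) = 0" for i j
  proof -
    have "pderiv_v i f y * (x$j - y$j) - pderiv_v j f y * (x$i - y$i)
        = c / P0 t * (n i t * (P0 t * x$j - P j t) - n j t * (P0 t * x$i - P i t))"
      using nz by (simp add: grad yi field_simps)
    then show ?thesis using cr by simp
  qed
  moreover have "(\<Sum>i\<in>UNIV. (x$i - y$i)^2) - d^2 = 0"
  proof -
    have "(\<Sum>i\<in>UNIV. (x$i - y$i)^2) = (\<Sum>i\<in>UNIV. (P0 t * x$i - P i t)^2) / (P0 t)^2"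
      using nz by (simp add: sum_divide_distrib yi field_simps)
    also have "\<dots> = d^2" using sq nz by (simp add: field_simps)
    finally show ?thesis by simp
  qed
  moreover have "(1 / (c^2 * h t)) * (\<Sum>i\<in>UNIV. (pderiv_v i f y)^2) - 1 = 0"
    using nz c by (simp add: grad h_eq power_mult_distrib sum_distrib_left[symmetric])
  moreover have "f y = 0" using P_on nz by (simp add: y_def)
  ultimately show "p \<in> offset_incidence f" unfolding offset_incidence_def p by blast
qed

lemma normal_point_in_param_incidence:
  assumes nz: "P0 t * h t * \<beta> t \<noteq> 0" and dist: "d^2 = l^2 * himp f (param_point P0 P t)"
  shows "(d, normal_point f l (param_point P0 P t)) \<in> param_incidence P0 P n h \<beta>"
proof -
  define c where "c = \<beta> t * inverse (P0 t ^ \<mu>)"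
  define x where "x = normal_point f l (param_point P0 P t)"
  have P0t: "P0 t \<noteq> 0" using nz by simp
  have xi: "P0 t * x$i - P i t = P0 t * l * c * n i t" for i
    using P0t by (simp add: x_def normal_point_def f_grad c_def) (simp add: param_point_def field_simps)
  have d2: "d^2 = l^2 * c^2 * h t" using dist himp_param_point[OF P0t] by (simp add: c_def)
  have "(\<Sum>i\<in>UNIV. (P0 t * x$i - P i t)^2) - d^2 * (P0 t)^2 = 0"
    by (simp add: xi d2 h_eq power_mult_distrib sum_distrib_left algebra_simps)
  moreover have "\<forall>i j. n i t * (P0 t * x$j - P j t) - n j t * (P0 t * x$i - P i t) = 0"
    by (simp add: xi algebra_simps)
  moreover have "1 / (P0 t * h t * \<beta> t) * P0 t * h t * \<beta> t - 1 = 0" using nz by simp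
  ultimately show ?thesis unfolding param_incidence_def x_def[symmetric] by blast
qed

text \<open>Restricted to a normal family it splits as \<open>a(y) + d b(y)\<close>; both parts are
  controlled at the generic surface points and hence on the whole surface.\<close>
lemma offset_incidence_subset_closure:
  "offset_incidence f \<subseteq> zariski_closure coords4 (param_incidence P0 P n h \<beta>)"
proof (clarify, unfold zariski_closure_def, intro CollectI ballI impI)
  fix d0 x0 G
  assume "(d0, x0) \<in> offset_incidence f" and G: "G \<in> polyfun_on coords4"
    and G_vanish: "\<forall>q\<in>param_incidence P0 P n h \<beta>. G q = 0"
  from \<open>(d0, x0) \<in> offset_incidence f\<close> obtain y0 l where y0: "f y0 = 0" and x0: "x0 = normal_point f l y0"
    and d0: "d0^2 = l^2 * himp f y0" by (rule offset_incidence_normal_form)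
  define s where "s = (\<lambda>y. l^2 * himp f y)"
  have s_pf: "s \<in> polyfun_on vcoords"
    unfolding s_def by (intro polyfun_on.pf_mult polyfun_on.pf_const polyfun_himp f_pf)
  obtain a b where a: "a \<in> polyfun_on vcoords" and b: "b \<in> polyfun_on vcoords"
    and ab: "\<And>d y. d^2 = s y \<Longrightarrow> G (d, normal_point f l y) = a y + d * b y"
    using decomposition_on_quadric[OF polyfun_along_normals[OF G f_pf, of l] s_pf] by auto
  have generic: "a (param_point P0 P t) = 0 \<and> s (param_point P0 P t) * b (param_point P0 P t) = 0"
    if generic_t: "P0 t * h t * \<beta> t \<noteq> 0" for t
  proof -
    let ?y = "param_point P0 P t"
    have "a ?y + d * b ?y = 0" if d: "d^2 = s ?y" for d
    proof -
      have "(d, normal_point f l ?y) \<in> param_incidence P0 P n h \<beta>"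
        using normal_point_in_param_incidence[OF generic_t] d by (simp add: s_def)
      then show ?thesis using G_vanish ab[OF d] by simp
    qed
    then show ?thesis using vanishing_at_both_roots by blast
  qed
  have "a y0 = 0"
    by (rule vanishing_from_generic_image[OF a _ y0]) (use generic in blast)
  moreover have "s y0 * b y0 = 0"
    by (rule vanishing_from_generic_image[OF polyfun_on.pf_mult[OF s_pf b] _ y0]) (use generic in blast)
  moreover have "d0^2 = s y0" using d0 by (simp add: s_def)
  ultimately show "G (d0, x0) = 0" using ab root_combination_vanishes x0 by metis
qed

lemma closures_equal:
  "zariski_closure coords4 (offset_incidence f)
     = zariski_closure coords4 (param_incidence P0 P n h \<beta>)"
  using zariski_closure_minimal[OF offset_incidence_subset_closure]
    zariski_closure_minimal[OF order.trans[OF param_incidence_subset zariski_closure_incl]]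
  by blast

end

text \<open>The theorem instantiates the locale.\<close>
theorem mainTheorem13:
  fixes f :: "complex^3 \<Rightarrow> complex"
    and P0 :: "complex^2 \<Rightarrow> complex" and P :: "3 \<Rightarrow> complex^2 \<Rightarrow> complex"
    and A0 :: "complex^2 \<Rightarrow> complex" and A :: "3 \<Rightarrow> complex^2 \<Rightarrow> complex"
    and g :: "complex^2 \<Rightarrow> complex" and n :: "3 \<Rightarrow> complex^2 \<Rightarrow> complex"
    and h :: "complex^2 \<Rightarrow> complex" and \<beta> :: "complex^2 \<Rightarrow> complex" and \<mu> :: nat
  assumes f_irr: "pf_irreducible vcoords f"
    and himp_nz: "\<exists>y. f y = 0 \<and> (\<Sum>i\<in>UNIV. (pderiv_v i f y)^2) \<noteq> 0"
    and P0_pf: "P0 \<in> polyfun_on vcoords" and P_pf: "\<And>i. P i \<in> polyfun_on vcoords"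
    and P0_nz: "P0 \<noteq> (\<lambda>_. 0)"
    and P_gcd: "pf_coprime vcoords (insert P0 (range P))"
    and P_on: "\<And>t. P0 t \<noteq> 0 \<Longrightarrow> f (\<chi> i. P i t / P0 t) = 0"
    and P_dense: "zariski_closure vcoords {(\<chi> i. P i t / P0 t) | t. P0 t \<noteq> 0} = {y. f y = 0}"
    and A0_pf: "A0 \<in> polyfun_on vcoords" and A_pf: "\<And>i. A i \<in> polyfun_on vcoords"
    and A0_nz: "A0 \<noteq> (\<lambda>_. 0)"
    and A_cross: "\<And>t i. P0 t \<noteq> 0 \<Longrightarrow> A0 t \<noteq> 0 \<Longrightarrow>
        cross3c (\<chi> k. pderiv_v 1 (\<lambda>s. P k s / P0 s) t) (\<chi> k. pderiv_v 2 (\<lambda>s. P k s / P0 s) t) $ i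
          = A i t / A0 t"
    and g_pf: "g \<in> polyfun_on vcoords" and g_nz: "g \<noteq> (\<lambda>_. 0)"
    and n_pf: "\<And>i. n i \<in> polyfun_on vcoords"
    and A_n: "\<And>i. A i = (\<lambda>t. g t * n i t)"
    and n_gcd: "pf_coprime vcoords (range n)"
    and h_def: "h = (\<lambda>t. \<Sum>i\<in>UNIV. (n i t)^2)"
    and \<beta>_pf: "\<beta> \<in> polyfun_on vcoords" and \<beta>_nz: "\<beta> \<noteq> (\<lambda>_. 0)"
    and \<beta>_P0: "pf_coprime vcoords {\<beta>, P0}"
    and f_grad: "\<And>t i. P0 t \<noteq> 0 \<Longrightarrow>
        pderiv_v i f (\<chi> k. P k t / P0 t) = \<beta> t * inverse (P0 t ^ \<mu>) * n i t"
  shows "generic_offset f = zariski_closure coords4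
     {(d, x). \<exists>r t. (\<Sum>i\<in>UNIV. (P0 t * x$i - P i t)^2) - d^2 * (P0 t)^2 = 0 \<and>
        (\<forall>i j. n i t * (P0 t * x$j - P j t) - n j t * (P0 t * x$i - P i t) = 0) \<and>
        r * P0 t * h t * \<beta> t - 1 = 0}"
proof -
  have image: "{(\<chi> i. P i t / P0 t) | t. P0 t \<noteq> 0} = param_point P0 P ` {t. P0 t \<noteq> 0}"
    by (auto simp: param_point_def)
  interpret offset_parametrization f P0 P n h \<beta> \<mu>
  proof
    show "f \<in> polyfun_on vcoords" using f_irr by (simp add: pf_irreducible_def)
    show "zariski_closure vcoords (param_point P0 P ` {t. P0 t \<noteq> 0}) = {y. f y = 0}"
      using P_dense by (simp only: image)
  qed (use himp_nz P0_pf P_pf P0_nz P_on n_pf h_def \<beta>_pf \<beta>_nz f_grad in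
      \<open>auto simp: himp_def param_point_def\<close>)
  show ?thesis using closures_equal unfolding generic_offset_def param_incidence_def .
qed

end
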